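(* Let $\mathcal D$ be a finite nonempty set, and let $\mathcal A^{\mathcal D}_{P,R}$ be the subring of $\mathcal H^{\mathcal D}_{P,R}$ consisting of the free $\mathbb Z$-algebra generated by the decorated planar rooted trees (equivalently, the $\mathbb Z$-span of the planar forests). Then $(e_F)_F$, $F$ running over all planar forests decorated by $\mathcal D$, is a $\mathbb Z$-basis of $\mathcal A^{\mathcal D}_{P,R}$.
   Context: $\mathcal H^{\mathcal D}_{P,R}$ is the free associative unital $\mathbb Q$-algebra on the set of planar rooted trees (finite trees with a root, embedded in the plane, edges oriented away from the root) decorated by $\mathcal D$; its basis is the set of planar forests $t_1\cdots t_n$ ($1$ = empty forest). Coproduct: $\Delta(F)=\sum_cP^c(F)\otimes R^c(F)$ over all cuts $c=(c_i)$ of $F=t_1\cdots t_n$, each $c_i$ being the empty cut of $t_i$ ($P=1,R=t_i$), the total cut ($P=t_i,R=1$), or an admissible cut (a nonempty set of edges of $t_i$ such that every oriented path meets at most one of them, with $R^{c_i}(t_i)$ the component of the root and $P^{c_i}(t_i)$ the left-to-right planar forest of the other components); $P^c(F)=\prod_iP^{c_i}(t_i)$, $R^c(F)=\prod_iR^{c_i}(t_i)$; counit $\varepsilon(F)=0$ for $F\ne1$. $B_d^+$ grafts $t_1\cdots t_n$ (in order) on a new root decorated by $d$; $\bullet_d=B_d^+(1)$; $\gamma_d$ is the linear map with $\gamma_d(1)=0$, $\gamma_d(t_1\cdots t_n)=t_1\cdots t_{n-1}$ if $t_n=\bullet_d$, $0$ otherwise. There is a unique bilinear form $(\,,\,)$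 on $\mathcal H^{\mathcal D}_{P,R}$ with $(1,x)=\varepsilon(x)$, $(x_1x_2,y)=(x_1\otimes x_2,\Delta(y))$ and $(B_d^+(x),y)=(x,\gamma_d(y))$; it is nondegenerate, and $(e_F)_F$ denotes the basis of $\mathcal H^{\mathcal D}_{P,R}$ defined by $(e_F,G)=\delta_{F,G}$ for all planar forests $G$. *)

theory Defs
  imports Main "HOL.Rat"
begin

text \<open>Planar forests
  are lists of such trees; the empty list is the empty forest 1.\<close>

datatype 'd ptree = Node 'd "'d ptree list"

type_synonym 'd forest = "'d ptree list"

fun decs :: "'d ptree \<Rightarrow> 'd set" where
  "decs (Node d ts) = insert d (\<Union> (set (map decs ts)))"

definition forest_in :: "'d set \<Rightarrow> 'd forest \<Rightarrow> bool" where
  "forest_in D F \<longleftrightarrow> (\<forall>t \<in> set F. decs t \<subseteq> D)"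

text \<open>All cuts of a forest, as a list (one entry per cut) of pairs (P^c(F), R^c(F)).
  For each tree t_i = B_d^+(ts) one chooses either the total cut (P = t_i, R = 1),
  or a cut that is empty or admissible; the latter are obtained by choosing, for
  each subtree grafted on the root, either to cut the edge to it (the whole subtree
  goes to P) or to keep the edge and cut inside the subtree (empty or admissible),
  i.e. exactly a cut of the forest ts followed by regrafting the trunk part on the root.
  Pruned parts are collected left to right.\<close>

fun cuts :: "'d forest \<Rightarrow> ('d forest \<times> 'd forest) list" where
  "cuts [] = [([], [])]"
| "cuts (Node d ts # F) =
     concat (map (\<lambda>(P1, R1). map (\<lambda>(P2, R2). (P1 @ P2, R1 @ R2)) (cuts F))
       (([Node d ts], []) # map (\<lambda>(P, R). (P, [Node d R])) (cuts ts)))"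

text \<open>The pairing on planar forests determined by (1,x) = eps(x),
  (x1 x2, y) = (x1 \<otimes> x2, Delta y), (B_d^+(x), y) = (x, gamma_d(y)).\<close>

function pair :: "'d forest \<Rightarrow> 'd forest \<Rightarrow> rat" where
  "pair [] G = (if G = [] then 1 else 0)"
| "pair [Node d ts] G =
     (if G \<noteq> [] \<and> last G = Node d [] then pair ts (butlast G) else 0)"
| "pair (t # t' # F) G =
     sum_list (map (\<lambda>(P, R). pair [t] P * pair (t' # F) R) (cuts G))"
  by pat_completeness auto
termination
  by (relation "measure (\<lambda>(F, G). size_list size F)") auto

text \<open>Elements of H^D_{P,R}: finitely supported rational coefficient functions on
  planar forests decorated by D.\<close>

definition in_H :: "'d set \<Rightarrow> ('d forest \<Rightarrow> rat) \<Rightarrow> bool" where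
  "in_H D x \<longleftrightarrow> finite {F. x F \<noteq> 0} \<and> (\<forall>F. x F \<noteq> 0 \<longrightarrow> forest_in D F)"

definition form :: "('d forest \<Rightarrow> rat) \<Rightarrow> 'd forest \<Rightarrow> rat" where
  "form x G = (\<Sum>F \<in> {F. x F \<noteq> 0}. x F * pair F G)"

definition dual_basis :: "'d set \<Rightarrow> 'd forest \<Rightarrow> ('d forest \<Rightarrow> rat)" where
  "dual_basis D F = (THE x. in_H D x \<and>
      (\<forall>G. forest_in D G \<longrightarrow> form x G = (if G = F then 1 else 0)))"

definition in_A :: "'d set \<Rightarrow> ('d forest \<Rightarrow> rat) \<Rightarrow> bool" where
  "in_A D x \<longleftrightarrow> in_H D x \<and> (\<forall>G. x G \<in> \<int>)"

end

theory Submission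
  imports Defs "Jordan_Normal_Form.Determinant"
begin

text \<open>
  The pairing takes integer values and vanishes between forests of different weights (numbers
  of vertices). The heart of the proof is that every forest G has an integral dual: an element
  \<open>x\<^sub>G\<close> with integer coefficients, homogeneous of the weight of G, such that
  \<open>(x\<^sub>G, H) = \<delta>\<^sub>G\<^sub>H\<close> for all forests H. It is constructed by well-founded induction,
  comparing forests by weight and then by their depth sequences read from the right.
  If G ends with a single vertex, \<open>G = G' \<bullet>\<^sub>e\<close>, then \<open>x\<^sub>G = B\<^sup>+\<^sub>e(x\<^sub>G')\<close>.
  Otherwise G is obtained by grafting a forest \<open>P = P' \<bullet>\<^sub>e\<close> on the rightmost leaf of a
  forest R, and \<open>(B\<^sup>+\<^sub>e(x\<^sub>P') x\<^sub>R, H)\<close> counts the cuts of H with pruned part P and trunk R.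
  This count is 1 for H = G, and every other forest with such a cut is smaller than G, so
  subtracting integer multiples of their duals yields \<open>x\<^sub>G\<close>. On each finite homogeneous
  component the duals form a left inverse of the pairing matrix, so the pairing is
  nondegenerate; hence \<open>x\<^sub>G = e\<^sub>G\<close>, and an integral element x equals \<open>\<Sum> (x, F) e\<^sub>F\<close>,
  where the coefficients \<open>(x, F)\<close> are integers.
\<close>

section \<open>Weight and depth sequences\<close>

fun weight :: "'d forest \<Rightarrow> nat" where
  "weight [] = 0"
| "weight (Node d ts # F) = Suc (weight ts + weight F)"

fun depths :: "nat \<Rightarrow> 'd forest \<Rightarrow> nat list" where
  "depths k [] = []"
| "depths k (Node d ts # F) = k # depths (Suc k) ts @ depths k F"

lemmas forest_induct = weight.induct[case_names Nil Node]

lemma weight_append [simp]: "weight (F @ G) = weight F + weight G"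
  by (induction F rule: forest_induct) auto

lemma weight_eq_0_iff [simp]: "weight F = 0 \<longleftrightarrow> F = []"
  by (cases F rule: weight.cases) auto

lemma weight_Cons: "weight (t # F) = weight [t] + weight F"
  by (cases t) simp

lemma forest_snoc_induct [case_names Nil snoc]:
  assumes "P []" and "\<And>F d ts. P ts \<Longrightarrow> P (F @ [Node d ts])"
  shows "P G"
proof (induction "weight G" arbitrary: G rule: less_induct)
  case less
  show ?case
  proof (cases G rule: rev_exhaust)
    case (snoc F t)
    obtain d ts where "t = Node d ts" by (cases t)
    with snoc less show ?thesis by (auto intro: assms(2))
  qed (simp add: assms(1))
qed

lemma depths_append [simp]: "depths k (F @ G) = depths k F @ depths k G"
  by (induction k F rule: depths.induct) auto

lemma length_depths [simp]: "length (depths k F) = weight F"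
  by (induction k F rule: depths.induct) auto

lemma depths_eq_Nil_iff [simp]: "depths k F = [] \<longleftrightarrow> F = []"
  by (metis length_0_conv length_depths weight_eq_0_iff)

lemma depths_ge: "x \<in> set (depths k F) \<Longrightarrow> k \<le> x"
  by (induction k F rule: depths.induct) fastforce+

lemma depths_shift: "depths (k + j) F = map (\<lambda>x. x + j) (depths k F)"
  by (induction k F rule: depths.induct) auto

lemma forest_in_Nil [simp]: "forest_in D []"
  by (simp add: forest_in_def)

lemma forest_in_append [simp]: "forest_in D (F @ G) \<longleftrightarrow> forest_in D F \<and> forest_in D G"
  by (auto simp: forest_in_def)

lemma forest_in_Cons [simp]:
  "forest_in D (Node d ts # F) \<longleftrightarrow> d \<in> D \<and> forest_in D ts \<and> forest_in D F"
  by (auto simp: forest_in_def)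

lemma finite_forests_weight:
  assumes "finite D"
  shows "finite {F. forest_in D F \<and> weight F = n}"
proof -
  have "finite {F. forest_in D F \<and> weight F \<le> n}"
  proof (induction n)
    case 0
    then show ?case by (simp add: Collect_conv_if)
  next
    case (Suc n)
    let ?S = "{F. forest_in D F \<and> weight F \<le> n}"
    have "{F. forest_in D F \<and> weight F \<le> Suc n}
        \<subseteq> insert [] ((\<lambda>(d, ts, F). Node d ts # F) ` (D \<times> ?S \<times> ?S))"
    proof
      fix F assume "F \<in> {F. forest_in D F \<and> weight F \<le> Suc n}"
      then show "F \<in> insert [] ((\<lambda>(d, ts, F). Node d ts # F) ` (D \<times> ?S \<times> ?S))"
        by (cases F rule: weight.cases) force+
    qed
    then show ?case
      using Suc assms by (auto intro: finite_subset)
  qed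
  then show ?thesis
    by (rule finite_subset[rotated]) auto
qed

section \<open>Cuts\<close>

lemma cuts_append:
  "cuts (F1 @ F2) =
     concat (map (\<lambda>(P1, R1). map (\<lambda>(P2, R2). (P1 @ P2, R1 @ R2)) (cuts F2)) (cuts F1))"
proof (induction F1 rule: forest_induct)
  case (Node d ts F)
  have concat_concat: "concat (concat xss) = concat (map concat xss)" for xss :: "'b list list list"
    by (induction xss) auto
  from Node show ?case
    by (simp add: map_concat concat_concat o_def case_prod_beta)
qed simp

lemma mem_cuts_append:
  "(P, R) \<in> set (cuts (F1 @ F2)) \<longleftrightarrow>
     (\<exists>P1 R1 P2 R2. (P1, R1) \<in> set (cuts F1) \<and> (P2, R2) \<in> set (cuts F2) \<and>
        P = P1 @ P2 \<and> R = R1 @ R2)"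
  unfolding cuts_append by force

lemma cuts_single:
  "cuts [Node d ts] = ([Node d ts], []) # map (\<lambda>(P, R). (P, [Node d R])) (cuts ts)"
  by (simp add: case_prod_beta o_def)

lemma mem_cuts_single:
  "(P, R) \<in> set (cuts [Node d ts]) \<longleftrightarrow>
     (P = [Node d ts] \<and> R = []) \<or> (\<exists>S. (P, S) \<in> set (cuts ts) \<and> R = [Node d S])"
  unfolding cuts_single by auto

lemma cuts_Cons_cases:
  assumes "(P, R) \<in> set (cuts (Node d ts # F))"
  obtains (total) P2 where "(P2, R) \<in> set (cuts F)" "P = Node d ts # P2"
  | (inner) P1 R1 P2 R2 where "(P1, R1) \<in> set (cuts ts)" "(P2, R2) \<in> set (cuts F)"
      "P = P1 @ P2" "R = Node d R1 # R2"
  using assms mem_cuts_append[of P R "[Node d ts]" F] unfolding mem_cuts_single by auto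

lemma weight_cuts: "(P, R) \<in> set (cuts G) \<Longrightarrow> weight P + weight R = weight G"
proof (induction G arbitrary: P R rule: forest_induct)
  case (Node d ts F)
  from Node.prems show ?case
    by (cases rule: cuts_Cons_cases) (auto dest!: Node.IH)
qed simp

lemma forest_in_cuts:
  "(P, R) \<in> set (cuts G) \<Longrightarrow> forest_in D G \<longleftrightarrow> forest_in D P \<and> forest_in D R"
proof (induction G arbitrary: P R rule: forest_induct)
  case (Node d ts F)
  from Node.prems show ?case
    by (cases rule: cuts_Cons_cases) (auto dest!: Node.IH)
qed simp

lemma cuts_pruned_Nil: "([], R) \<in> set (cuts G) \<Longrightarrow> R = G"
proof (induction G arbitrary: R rule: forest_induct)
  case (Node d ts F)
  from Node.prems show ?case
    by (cases rule: cuts_Cons_cases) (auto dest!: Node.IH)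
qed simp

lemma cuts_trunk_Nil: "(P, []) \<in> set (cuts G) \<Longrightarrow> P = G"
proof (induction G arbitrary: P rule: forest_induct)
  case (Node d ts F)
  from Node.prems show ?case
    by (cases rule: cuts_Cons_cases) (auto dest!: Node.IH)
qed simp

lemma cuts_single_cases:
  assumes "(P, R) \<in> set (cuts [Node e ts])"
  obtains (total) "P = [Node e ts]" "R = []"
  | (untouched) "P = []" "R = [Node e ts]"
  | (leaf) "P = ts" "ts \<noteq> []" "R = [Node e []]"
  | (inner) S where "(P, S) \<in> set (cuts ts)" "P \<noteq> []" "S \<noteq> []" "R = [Node e S]"
  using assms unfolding mem_cuts_single
  by (metis cuts_pruned_Nil cuts_trunk_Nil)

lemma sum_list_if_eq_count:
  "(\<Sum>x\<leftarrow>xs. if x = a then c else 0) = of_nat (count_list xs a) * (c :: 'b :: semiring_1)"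
  by (induction xs) (auto simp: algebra_simps)

lemma count_cuts_append:
  assumes unique: "\<And>P1 R1 P2 R2. (P1, R1) \<in> set (cuts F1) \<Longrightarrow> (P2, R2) \<in> set (cuts F2) \<Longrightarrow>
      P1 @ P2 = Q1 @ Q2 \<Longrightarrow> R1 @ R2 = S1 @ S2 \<Longrightarrow> (P1, R1) = (Q1, S1)"
  shows "count_list (cuts (F1 @ F2)) (Q1 @ Q2, S1 @ S2) =
      count_list (cuts F1) (Q1, S1) * count_list (cuts F2) (Q2, S2)"
proof -
  let ?g = "\<lambda>(P1, R1). map (\<lambda>(P2, R2). (P1 @ P2, R1 @ R2)) (cuts F2)"
  have count_g: "count_list (?g c) (Q1 @ Q2, S1 @ S2) =
      (if c = (Q1, S1) then count_list (cuts F2) (Q2, S2) else 0)" if "c \<in> set (cuts F1)" for c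
  proof (cases "c = (Q1, S1)")
    case True
    have "inj (\<lambda>(P2, R2). (Q1 @ P2, S1 @ R2))"
      by (auto intro: injI)
    then show ?thesis
      using True count_list_map_conv[of "\<lambda>(P2, R2). (Q1 @ P2, S1 @ R2)" "cuts F2" "(Q2, S2)"]
      by simp
  next
    case False
    obtain P1 R1 where c: "c = (P1, R1)"
      by (cases c)
    have "(Q1 @ Q2, S1 @ S2) \<notin> set (?g c)"
      using False that unique unfolding c by fastforce
    with False show ?thesis
      by simp
  qed
  have "count_list (cuts (F1 @ F2)) (Q1 @ Q2, S1 @ S2) =
      (\<Sum>c\<leftarrow>cuts F1. count_list (?g c) (Q1 @ Q2, S1 @ S2))"
    by (simp add: cuts_append count_list_concat o_def)
  also have "\<dots> = (\<Sum>c\<leftarrow>cuts F1. if c = (Q1, S1) then count_list (cuts F2) (Q2, S2) else 0)"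
    by (intro arg_cong[where f = sum_list] map_cong refl count_g)
  finally show ?thesis
    by (simp add: sum_list_if_eq_count)
qed

lemma count_cuts_single_trunk:
  "count_list (cuts [Node d ts]) (P, [Node d S]) = count_list (cuts ts) (P, S)"
proof -
  have "inj (\<lambda>(P, R). (P, [Node d R]))"
    by (auto intro: injI)
  from count_list_map_conv[OF this, of "cuts ts" "(P, S)"] show ?thesis
    unfolding cuts_single by simp
qed

lemma count_cuts_pruned_Nil: "count_list (cuts G) ([], G) = 1"
proof (induction G rule: forest_induct)
  case (Node d ts F)
  have "count_list (cuts ([Node d ts] @ F)) ([] @ [], [Node d ts] @ F) =
      count_list (cuts [Node d ts]) ([], [Node d ts]) * count_list (cuts F) ([], F)"
    by (rule count_cuts_append) (auto dest: cuts_pruned_Nil)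
  with Node count_cuts_single_trunk[of d ts "[]" ts] show ?case
    by simp
qed simp

lemma count_cuts_trunk_Nil: "count_list (cuts G) (G, []) = 1"
proof (induction G rule: forest_induct)
  case (Node d ts F)
  have "count_list (cuts ([Node d ts] @ F)) ([Node d ts] @ F, [] @ []) =
      count_list (cuts [Node d ts]) ([Node d ts], []) * count_list (cuts F) (F, [])"
    by (rule count_cuts_append) (auto dest: cuts_trunk_Nil)
  moreover have "count_list (cuts [Node d ts]) ([Node d ts], []) = 1"
    unfolding cuts_single by (auto intro!: count_notin)
  ultimately show ?case
    using Node by simp
qed simp

section \<open>Grafting on the rightmost leaf\<close>

text \<open>\<open>graft P R\<close> grafts P on the last vertex of R in preorder, which is a leaf.\<close>

fun graft :: "'d forest \<Rightarrow> 'd forest \<Rightarrow> 'd forest" where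
  "graft P [] = []"
| "graft P [Node d ts] = [Node d (if ts = [] then P else graft P ts)]"
| "graft P (t # t' # R) = t # graft P (t' # R)"

lemma graft_snoc:
  "graft P (R @ [Node e S]) = R @ [Node e (if S = [] then P else graft P S)]"
proof (induction R)
  case (Cons t R)
  then show ?case
    by (cases R) auto
qed simp

lemma depths_graft:
  "R \<noteq> [] \<Longrightarrow> depths k (graft X R) = depths k R @ depths (Suc (last (depths k R))) X"
proof (induction R arbitrary: k rule: forest_snoc_induct)
  case (snoc F e S)
  then show ?case
    by (cases "S = []") (simp_all add: graft_snoc)
qed simp

lemma graft_eq_Nil_iff [simp]: "graft X R = [] \<longleftrightarrow> R = []"
  by (induction X R rule: graft.induct) auto

lemma last_depths_graft_gt:
  assumes "R \<noteq> []" "X \<noteq> []"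
  shows "last (depths k R) < last (depths k (graft X R))"
  using assms depths_ge[of "last (depths k (graft X R))" "Suc (last (depths k R))" X]
  by (simp add: depths_graft)

lemma count_cuts_graft:
  assumes "R \<noteq> []"
  shows "count_list (cuts (graft P R)) (P, R) = 1"
  using assms
proof (induction R rule: forest_snoc_induct)
  case (snoc R e S)
  define X where "X = (if S = [] then P else graft P S)"
  have "count_list (cuts (graft P (R @ [Node e S]))) (P, R @ [Node e S]) =
      count_list (cuts (R @ [Node e X])) ([] @ P, R @ [Node e S])"
    by (simp add: graft_snoc X_def)
  also have "\<dots> = count_list (cuts R) ([], R) * count_list (cuts [Node e X]) (P, [Node e S])"
  proof (rule count_cuts_append)
    fix P1 R1 P2 R2
    assume cut1: "(P1, R1) \<in> set (cuts R)" and cut2: "(P2, R2) \<in> set (cuts [Node e X])"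
      and "P1 @ P2 = [] @ P" and R: "R1 @ R2 = R @ [Node e S]"
    have "weight P1 + weight R1 = weight R"
      using cut1 by (rule weight_cuts)
    moreover from cut2 have "R2 = [] \<or> (\<exists>S'. R2 = [Node e S'])"
      unfolding mem_cuts_single by auto
    ultimately show "(P1, R1) = ([], R)"
      using R by (auto simp flip: weight_eq_0_iff dest: arg_cong[where f = weight])
  qed
  also have "count_list (cuts X) (P, S) = 1"
    using snoc.IH count_cuts_trunk_Nil[of P] by (cases "S = []") (simp_all add: X_def)
  then have "count_list (cuts R) ([], R) * count_list (cuts [Node e X]) (P, [Node e S]) = 1"
    by (simp only: count_cuts_pruned_Nil count_cuts_single_trunk)
  finally show ?case .
qed simp

lemma graft_in_cuts: "R \<noteq> [] \<Longrightarrow> (P, R) \<in> set (cuts (graft P R))"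
  using count_cuts_graft[of R P] by (metis count_notin zero_neq_one)

lemma graft_decomposition:
  assumes "G \<noteq> []" and "\<And>e. last G \<noteq> Node e []"
  shows "\<exists>P e R. R \<noteq> [] \<and> G = graft (P @ [Node e []]) R"
  using assms
proof (induction G rule: forest_snoc_induct)
  case (snoc F d ts)
  then have "ts \<noteq> []"
    by auto
  show ?case
  proof (cases "\<exists>e. last ts = Node e []")
    case True
    then obtain e where "last ts = Node e []"
      by blast
    with \<open>ts \<noteq> []\<close> have "ts = butlast ts @ [Node e []]"
      by (metis append_butlast_last_id)
    then have "F @ [Node d ts] = graft (butlast ts @ [Node e []]) (F @ [Node d []])"
      by (simp add: graft_snoc)
    then show ?thesis
      by blast
  next
    case False
    with snoc.IH \<open>ts \<noteq> []\<close> obtain P e R where "R \<noteq> []" "ts = graft (P @ [Node e []]) R"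
      by blast
    then have "F @ [Node d ts] = graft (P @ [Node e []]) (F @ [Node d R])"
      by (simp add: graft_snoc)
    then show ?thesis
      by blast
  qed
qed simp

definition first_diff_less :: "nat list \<Rightarrow> nat list \<Rightarrow> bool" where
  "first_diff_less xs ys \<longleftrightarrow> (\<exists>u a b v w. xs = u @ a # v \<and> ys = u @ b # w \<and> a < b)"

lemma first_diff_less_append: "first_diff_less xs ys \<Longrightarrow> first_diff_less (xs @ v) (ys @ w)"
  unfolding first_diff_less_def by fastforce

lemma first_diff_less_rev_last:
  assumes "xs \<noteq> []" "ys \<noteq> []" "last xs < last ys"
  shows "first_diff_less (rev xs) (rev ys)"
  using assms unfolding first_diff_less_def
  by (metis append_Nil append_butlast_last_id rev.simps(2) rev_append rev_rev_ident)

lemma last_depths_total_cut_less: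
  assumes "R \<noteq> []"
  shows "last (depths k (G @ [Node e ts])) < last (depths k (graft (X @ [Node e ts]) R))"
proof -
  define j where "j = Suc (last (depths k R)) - k"
  have "k \<le> last (depths k R)"
    using assms depths_ge[of "last (depths k R)" k R] by simp
  then have "0 < j" "Suc (last (depths k R)) = k + j"
    by (simp_all add: j_def)
  with assms depths_shift[of "Suc k" j ts] show ?thesis
    by (simp add: depths_graft depths_shift last_map)
qed

lemma first_diff_less_graft_below_root:
  assumes "X \<noteq> []"
  shows "first_diff_less (rev (depths k (G @ [Node e ts]))) (rev (depths k (R @ [Node e (X @ ts)])))"
proof -
  obtain b w where bw: "rev (depths (Suc k) X) = b # w"
    using assms by (metis depths_eq_Nil_iff neq_Nil_conv rev_is_Nil_conv)
  then have "Suc k \<le> b"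
    by (metis depths_ge list.set_intros(1) set_rev)
  with bw show ?thesis
    unfolding first_diff_less_def by (intro exI[of _ "rev (depths (Suc k) ts)"]) auto
qed

text \<open>Among the forests with cut \<open>(P, R)\<close>, \<open>graft P R\<close> has the largest reversed depth sequence.
  The prefix A stands for pruned parts that the induction moves in front of P.\<close>

lemma cuts_graft_maximal:
  assumes "(P, R) \<in> set (cuts G)" "R \<noteq> []" "A @ P \<noteq> []"
  shows "(A = [] \<and> G = graft P R) \<or>
    first_diff_less (rev (depths k G)) (rev (depths k (graft (A @ P) R)))"
  using assms
proof (induction G arbitrary: P R A k rule: forest_snoc_induct)
  case (snoc G1 e ts)
  from snoc.prems(1) obtain P1 R1 P2 R2 where cut1: "(P1, R1) \<in> set (cuts G1)"
    and cut2: "(P2, R2) \<in> set (cuts [Node e ts])" and PR: "P = P1 @ P2" "R = R1 @ R2"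
    unfolding mem_cuts_append by blast
  let ?G = "G1 @ [Node e ts]"
  have eq_graft_if: "A = [] \<and> ?G = graft P R" if "A @ P1 = []" "?G = graft P2 (G1 @ R2)"
    using that cut1 cuts_pruned_Nil PR by auto
  from cut2 show ?case
  proof (cases rule: cuts_single_cases)
    case total
    then have "last (depths k ?G) < last (depths k (graft (A @ P) R))"
      using PR snoc.prems(2) last_depths_total_cut_less[of R1 k G1 e ts "A @ P1"] by simp
    with snoc.prems(2) show ?thesis
      by (intro disjI2 first_diff_less_rev_last) simp_all
  next
    case untouched
    then have "last (depths k ?G) < last (depths k (graft (A @ P) R))"
      using PR snoc.prems(2,3) last_depths_graft_gt[of R "A @ P" k] by simp
    with snoc.prems(2) show ?thesis
      by (intro disjI2 first_diff_less_rev_last) simp_all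
  next
    case leaf
    show ?thesis
    proof (cases "A @ P1 = []")
      case True
      with leaf show ?thesis
        by (intro disjI1 eq_graft_if) (simp_all add: graft_snoc)
    next
      case False
      with leaf PR show ?thesis
        using first_diff_less_graft_below_root[of "A @ P1" k G1 e ts R1] by (simp add: graft_snoc)
    qed
  next
    case (inner S)
    from snoc.IH[OF inner(1,3), of "A @ P1" "Suc k"] inner(2)
    consider "A @ P1 = []" "ts = graft P2 S"
      | "first_diff_less (rev (depths (Suc k) ts)) (rev (depths (Suc k) (graft (A @ P1 @ P2) S)))"
      by auto
    then show ?thesis
    proof cases
      case 1
      with inner show ?thesis
        by (intro disjI1 eq_graft_if) (simp_all add: graft_snoc)
    next
      case 2
      with inner PR show ?thesis
        by (auto simp: graft_snoc intro!: first_diff_less_append)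
    qed
  qed
qed simp

definition forest_less :: "('d forest \<times> 'd forest) set" where
  "forest_less = inv_image (lenlex less_than) (\<lambda>G. rev (depths 0 G))"

lemma wf_forest_less: "wf forest_less"
  by (simp add: forest_less_def wf_lenlex)

lemma forest_less_if_weight_less: "weight G' < weight G \<Longrightarrow> (G', G) \<in> forest_less"
  by (simp add: forest_less_def lenlex_conv)

lemma forest_less_if_first_diff_less:
  "weight G' = weight G \<Longrightarrow> first_diff_less (rev (depths 0 G')) (rev (depths 0 G)) \<Longrightarrow>
    (G', G) \<in> forest_less"
  by (auto simp: forest_less_def lenlex_conv lex_conv first_diff_less_def)

lemma forest_less_graft:
  assumes "(P, R) \<in> set (cuts H)" "R \<noteq> []" "P \<noteq> []" "H \<noteq> graft P R"
  shows "(H, graft P R) \<in> forest_less"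
proof (rule forest_less_if_first_diff_less)
  show "weight H = weight (graft P R)"
    using weight_cuts[OF assms(1)] weight_cuts[OF graft_in_cuts[OF assms(2)]] by simp
  show "first_diff_less (rev (depths 0 H)) (rev (depths 0 (graft P R)))"
    using cuts_graft_maximal[of P R H "[]" 0] assms by auto
qed

section \<open>The pairing\<close>

lemma sum_list_in_Ints: "(\<And>x. x \<in> set xs \<Longrightarrow> f x \<in> \<int>) \<Longrightarrow> (\<Sum>x\<leftarrow>xs. f x) \<in> \<int>"
  by (induction xs) auto

lemma sum_list_nonzero_imp_ex: "(\<Sum>x\<leftarrow>xs. f x) \<noteq> 0 \<Longrightarrow> \<exists>x\<in>set xs. f x \<noteq> 0"
  by (induction xs) auto

lemma sum_list_sum_swap: "(\<Sum>x\<leftarrow>xs. \<Sum>i\<in>S. f i x) = (\<Sum>i\<in>S. \<Sum>x\<leftarrow>xs. f i x)"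
  by (induction xs) (simp_all add: sum.distrib)

lemma pair_Cons: "F \<noteq> [] \<Longrightarrow> pair (t # F) G = (\<Sum>(P, R)\<leftarrow>cuts G. pair [t] P * pair F R)"
  by (cases F) simp_all

lemma pair_in_Ints: "pair F G \<in> \<int>"
  by (induction F G rule: pair.induct)
    (auto intro!: sum_list_in_Ints Ints_mult simp: case_prod_beta)

lemma weight_eq_if_pair_nonzero: "pair F G \<noteq> 0 \<Longrightarrow> weight F = weight G"
proof (induction F G rule: pair.induct)
  case (2 d ts G)
  then have "G \<noteq> []" "last G = Node d []" "weight ts = weight (butlast G)"
    by (auto split: if_splits)
  moreover from this have "G = butlast G @ [Node d []]"
    by (metis append_butlast_last_id)
  ultimately show ?case
    by (metis add_Suc_right add_0_right weight.simps weight_append)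
next
  case (3 t t' F G)
  then obtain P R where cut: "(P, R) \<in> set (cuts G)" "pair [t] P \<noteq> 0" "pair (t' # F) R \<noteq> 0"
    by (auto dest!: sum_list_nonzero_imp_ex)
  with 3 weight_cuts[OF cut(1)] weight_Cons[of t "t' # F"] show ?case
    by auto
qed (simp split: if_splits)

definition supp :: "('a \<Rightarrow> 'b :: zero) \<Rightarrow> 'a set" where
  "supp x = {F. x F \<noteq> 0}"

lemma in_H_iff_supp: "in_H D x \<longleftrightarrow> finite (supp x) \<and> (\<forall>F\<in>supp x. forest_in D F)"
  by (auto simp: in_H_def supp_def)

lemma supp_diff_subset:
  fixes x y :: "'a \<Rightarrow> 'b :: group_add"
  shows "supp (\<lambda>F. x F - y F) \<subseteq> supp x \<union> supp y"
  by (auto simp: supp_def)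

lemma supp_lincomb_subset:
  fixes y :: "'i \<Rightarrow> 'a \<Rightarrow> 'b :: semiring_0"
  shows "supp (\<lambda>F. \<Sum>i\<in>S. a i * y i F) \<subseteq> (\<Union>i\<in>S. supp (y i))"
  by (auto simp: supp_def intro: ccontr)

lemma form_conv_sum: "finite S \<Longrightarrow> supp x \<subseteq> S \<Longrightarrow> form x G = (\<Sum>F\<in>S. x F * pair F G)"
  unfolding form_def supp_def by (rule sum.mono_neutral_left) auto

lemma form_conv_sum_weight:
  assumes "finite (supp x)" "finite S" "\<And>F. F \<in> supp x \<Longrightarrow> weight F = weight H \<Longrightarrow> F \<in> S"
  shows "form x H = (\<Sum>F\<in>S. x F * pair F H)"
proof -
  have vanish: "x F * pair F H = 0" if "F \<notin> supp x \<inter> S" for F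
    using that assms(3) weight_eq_if_pair_nonzero by (auto simp: supp_def)
  have "form x H = (\<Sum>F\<in>supp x \<union> S. x F * pair F H)"
    using assms(1,2) by (intro form_conv_sum) auto
  also have "\<dots> = (\<Sum>F\<in>S. x F * pair F H)"
    using assms(1,2) vanish by (intro sum.mono_neutral_right) auto
  finally show ?thesis .
qed

lemma form_lincomb:
  assumes "finite S" "\<And>i. i \<in> S \<Longrightarrow> finite (supp (y i))"
  shows "form (\<lambda>F. \<Sum>i\<in>S. a i * y i F) H = (\<Sum>i\<in>S. a i * form (y i) H)"
proof -
  define U where "U = (\<Union>i\<in>S. supp (y i))"
  have "finite U"
    using assms by (simp add: U_def)
  from supp_lincomb_subset have "supp (\<lambda>F. \<Sum>i\<in>S. a i * y i F) \<subseteq> U"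
    unfolding U_def .
  then have "form (\<lambda>F. \<Sum>i\<in>S. a i * y i F) H = (\<Sum>F\<in>U. \<Sum>i\<in>S. a i * y i F * pair F H)"
    by (simp add: form_conv_sum[OF \<open>finite U\<close>] sum_distrib_right)
  also have "\<dots> = (\<Sum>i\<in>S. a i * (\<Sum>F\<in>U. y i F * pair F H))"
    by (subst sum.swap) (simp add: sum_distrib_left mult.assoc)
  also have "\<dots> = (\<Sum>i\<in>S. a i * form (y i) H)"
  proof (intro sum.cong refl)
    fix i assume "i \<in> S"
    then have "supp (y i) \<subseteq> U"
      by (auto simp: U_def)
    with \<open>finite U\<close> show "a i * (\<Sum>F\<in>U. y i F * pair F H) = a i * form (y i) H"
      by (simp add: form_conv_sum)
  qed
  finally show ?thesis .
qed

lemma form_diff: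
  assumes "finite (supp x)" "finite (supp y)"
  shows "form (\<lambda>F. x F - y F) H = form x H - form y H"
proof -
  let ?U = "supp x \<union> supp y"
  have "form (\<lambda>F. x F - y F) H = (\<Sum>F\<in>?U. (x F - y F) * pair F H)"
    using assms supp_diff_subset[of x y] by (intro form_conv_sum) auto
  also have "\<dots> = form x H - form y H"
    using assms by (simp add: form_conv_sum[of ?U] left_diff_distrib sum_subtractf)
  finally show ?thesis .
qed

lemma form_in_Ints: "(\<And>F. x F \<in> \<int>) \<Longrightarrow> form x H \<in> \<int>"
  unfolding form_def by (intro Ints_sum Ints_mult pair_in_Ints)

text \<open>Coefficients of \<open>B\<^sup>+\<^sub>e(a)\<close> and of the product \<open>B\<^sup>+\<^sub>e(a) b\<close>.\<close>

definition Bplus :: "'d \<Rightarrow> ('d forest \<Rightarrow> rat) \<Rightarrow> 'd forest \<Rightarrow> rat" where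
  "Bplus e a F = (case F of [Node d ts] \<Rightarrow> if d = e then a ts else 0 | _ \<Rightarrow> 0)"

definition Bplus_mult :: "'d \<Rightarrow> ('d forest \<Rightarrow> rat) \<Rightarrow> ('d forest \<Rightarrow> rat) \<Rightarrow> 'd forest \<Rightarrow> rat" where
  "Bplus_mult e a b F = (case F of Node d ts # F' \<Rightarrow> if d = e then a ts * b F' else 0 | [] \<Rightarrow> 0)"

lemma supp_Bplus: "supp (Bplus e a) = (\<lambda>ts. [Node e ts]) ` supp a"
proof -
  have "F \<in> supp (Bplus e a) \<longleftrightarrow> F \<in> (\<lambda>ts. [Node e ts]) ` supp a" for F
    by (cases F rule: weight.cases; cases "tl F") (auto simp: supp_def Bplus_def)
  then show ?thesis
    by blast
qed

lemma supp_Bplus_mult: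
  "supp (Bplus_mult e a b) \<subseteq> (\<lambda>(ts, F). Node e ts # F) ` (supp a \<times> supp b)"
proof
  fix F assume "F \<in> supp (Bplus_mult e a b)"
  then show "F \<in> (\<lambda>(ts, F). Node e ts # F) ` (supp a \<times> supp b)"
    by (cases F rule: weight.cases) (auto simp: supp_def Bplus_mult_def split: if_splits)
qed

lemma form_Bplus_conv_sum:
  "finite (supp a) \<Longrightarrow> form (Bplus e a) H = (\<Sum>ts\<in>supp a. a ts * pair [Node e ts] H)"
  by (simp add: form_conv_sum[of "(\<lambda>ts. [Node e ts]) ` supp a"] supp_Bplus sum.reindex inj_on_def)
    (simp add: Bplus_def)

lemma form_Bplus:
  assumes "finite (supp a)"
  shows "form (Bplus e a) H = (if H \<noteq> [] \<and> last H = Node e [] then form a (butlast H) else 0)"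
  using assms by (simp add: form_Bplus_conv_sum form_conv_sum[of "supp a"])

lemma form_Bplus_mult:
  assumes "finite (supp a)" "finite (supp b)" "b [] = 0"
  shows "form (Bplus_mult e a b) H = (\<Sum>(P, R)\<leftarrow>cuts H. form (Bplus e a) P * form b R)"
proof -
  let ?S = "supp a \<times> supp b"
  have "form (Bplus_mult e a b) H =
      (\<Sum>(ts, F)\<in>?S. Bplus_mult e a b (Node e ts # F) * pair (Node e ts # F) H)"
    using assms supp_Bplus_mult[of e a b]
    by (simp add: form_conv_sum[of "(\<lambda>(ts, F). Node e ts # F) ` ?S"] sum.reindex inj_on_def
        case_prod_beta)
  also have "\<dots> = (\<Sum>(ts, F)\<in>?S. \<Sum>(P, R)\<leftarrow>cuts H. a ts * pair [Node e ts] P * (b F * pair F R))"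
  proof (intro sum.cong refl, clarify)
    fix ts F assume "ts \<in> supp a" "F \<in> supp b"
    with assms(3) have "F \<noteq> []"
      by (auto simp: supp_def)
    then show "Bplus_mult e a b (Node e ts # F) * pair (Node e ts # F) H =
        (\<Sum>(P, R)\<leftarrow>cuts H. a ts * pair [Node e ts] P * (b F * pair F R))"
      by (simp add: Bplus_mult_def pair_Cons split_def mult_ac flip: sum_list_const_mult)
  qed
  also have "\<dots> = (\<Sum>c\<leftarrow>cuts H. \<Sum>(ts, F)\<in>?S. a ts * pair [Node e ts] (fst c) * (b F * pair F (snd c)))"
    by (simp only: split_def sum_list_sum_swap)
  also have "\<dots> = (\<Sum>c\<leftarrow>cuts H.
      (\<Sum>ts\<in>supp a. a ts * pair [Node e ts] (fst c)) * (\<Sum>F\<in>supp b. b F * pair F (snd c)))"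
    by (simp add: sum_product sum.cartesian_product split_def del: pair.simps)
  also have "\<dots> = (\<Sum>(P, R)\<leftarrow>cuts H. form (Bplus e a) P * form b R)"
    using assms
    by (simp add: form_Bplus_conv_sum form_conv_sum[of "supp b"] split_def del: pair.simps)
  finally show ?thesis .
qed

section \<open>Integral duals\<close>

definition integral_dual :: "'d set \<Rightarrow> 'd forest \<Rightarrow> ('d forest \<Rightarrow> rat) \<Rightarrow> bool" where
  "integral_dual D G x \<longleftrightarrow> finite (supp x) \<and> (\<forall>F\<in>supp x. forest_in D F \<and> weight F = weight G) \<and>
     (\<forall>F. x F \<in> \<int>) \<and> (\<forall>H. form x H = (if H = G then 1 else 0))"

lemma integral_dual_Nil:
  fixes D :: "'d set"
  shows "integral_dual D [] (\<lambda>F. if F = [] then 1 else 0)"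
proof -
  have supp: "supp (\<lambda>F. if F = [] then 1 else 0 :: rat) = {[]}"
    by (auto simp: supp_def)
  have "form (\<lambda>F. if F = [] then 1 else 0) H = (if H = [] then 1 else 0)" for H :: "'d forest"
    by (simp add: form_conv_sum[of "{[]}"] supp)
  then show ?thesis
    by (simp add: integral_dual_def supp)
qed

lemma integral_dual_Bplus:
  assumes "integral_dual D G a" "e \<in> D"
  shows "integral_dual D (G @ [Node e []]) (Bplus e a)"
proof -
  have "form (Bplus e a) H = (if H = G @ [Node e []] then 1 else 0)" for H
    using assms(1) unfolding integral_dual_def
    by (auto simp: form_Bplus) (metis append_butlast_last_id)
  with assms show ?thesis
    unfolding integral_dual_def supp_Bplus by (auto simp: Bplus_def split: list.splits ptree.splits)
qed

lemma Bplus_mult_integral_duals: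
  assumes a: "integral_dual D P a" and b: "integral_dual D R b" and "R \<noteq> []" "e \<in> D"
  shows "finite (supp (Bplus_mult e a b))"
    and "F \<in> supp (Bplus_mult e a b) \<Longrightarrow>
      forest_in D F \<and> weight F = weight (P @ [Node e []]) + weight R"
    and "Bplus_mult e a b F \<in> \<int>"
    and "form (Bplus_mult e a b) H = of_nat (count_list (cuts H) (P @ [Node e []], R))"
proof -
  show "finite (supp (Bplus_mult e a b))"
    using a b by (auto simp: integral_dual_def intro: finite_subset[OF supp_Bplus_mult])
  show "F \<in> supp (Bplus_mult e a b) \<Longrightarrow>
      forest_in D F \<and> weight F = weight (P @ [Node e []]) + weight R"
    using a b \<open>e \<in> D\<close> supp_Bplus_mult[of e a b] by (fastforce simp: integral_dual_def)
  show "Bplus_mult e a b F \<in> \<int>"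
    using a b by (auto simp: integral_dual_def Bplus_mult_def split: list.splits ptree.splits)
  have "b [] = 0"
    using b \<open>R \<noteq> []\<close> by (auto simp: integral_dual_def supp_def)
  with a b have "form (Bplus_mult e a b) H = (\<Sum>c\<leftarrow>cuts H. if c = (P @ [Node e []], R) then 1 else 0)"
    unfolding integral_dual_def
    by (auto simp: form_Bplus_mult form_Bplus split_def intro!: arg_cong[where f = sum_list])
      (metis append_butlast_last_id)+
  then show "form (Bplus_mult e a b) H = of_nat (count_list (cuts H) (P @ [Node e []], R))"
    by (simp add: sum_list_if_eq_count)
qed

lemma integral_dual_correction:
  assumes y: "finite (supp y)" "\<And>F. F \<in> supp y \<Longrightarrow> forest_in D F \<and> weight F = weight G"
      "\<And>F. y F \<in> \<int>"
    and T: "finite T" "G \<notin> T" "\<And>H. H \<noteq> G \<Longrightarrow> form y H \<noteq> 0 \<Longrightarrow> H \<in> T" "form y G = 1"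
    and z: "\<And>H. H \<in> T \<Longrightarrow> integral_dual D H (z H)" "\<And>H. H \<in> T \<Longrightarrow> weight H = weight G"
  shows "integral_dual D G (\<lambda>F. y F - (\<Sum>H\<in>T. form y H * z H F))"
proof -
  let ?c = "\<lambda>F. \<Sum>H\<in>T. form y H * z H F"
  have fin_z: "finite (supp (z H))" if "H \<in> T" for H
    using z(1)[OF that] by (simp add: integral_dual_def)
  have supp_c: "supp ?c \<subseteq> (\<Union>H\<in>T. supp (z H))"
    by (rule supp_lincomb_subset)
  then have fin_c: "finite (supp ?c)"
    using T(1) fin_z by (meson finite_UN_I finite_subset)
  note supp_x = supp_diff_subset[of y ?c]
  have "form (\<lambda>F. y F - ?c F) H = (if H = G then 1 else 0)" for H
  proof -
    have "(\<Sum>H'\<in>T. form y H' * form (z H') H) = (\<Sum>H'\<in>T. if H' = H then form y H' else 0)"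
      using z(1) by (intro sum.cong refl) (auto simp: integral_dual_def)
    also have "\<dots> = (if H \<in> T then form y H else 0)"
      using T(1) by (simp add: sum.delta)
    finally have "form (\<lambda>F. y F - ?c F) H = form y H - (if H \<in> T then form y H else 0)"
      using y(1) fin_c fin_z T(1) by (simp add: form_diff form_lincomb)
    moreover have "form y H = 0" if "H \<noteq> G" "H \<notin> T"
      using T(3) that by blast
    ultimately show ?thesis
      using T(2,4) by auto
  qed
  moreover have "forest_in D F \<and> weight F = weight G" if "F \<in> supp (\<lambda>F. y F - ?c F)" for F
  proof -
    from that supp_x supp_c consider "F \<in> supp y" | H where "H \<in> T" "F \<in> supp (z H)"
      by blast
    then show ?thesis
    proof cases
      case 1
      then show ?thesis
        using y(2) by blast
    next
      case (2 H)
      then show ?thesis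
        using z by (auto simp: integral_dual_def)
    qed
  qed
  moreover have "y F - ?c F \<in> \<int>" for F
    using y(3) z(1)
    by (auto simp: integral_dual_def intro!: Ints_diff Ints_sum Ints_mult form_in_Ints)
  ultimately show ?thesis
    using finite_subset[OF supp_x] y(1) fin_c by (simp add: integral_dual_def)
qed

lemma integral_dual_graft:
  assumes "finite D" "R \<noteq> []" and G: "G = graft (P @ [Node e []]) R" "forest_in D G"
    and a: "integral_dual D P a" and b: "integral_dual D R b"
    and smaller: "\<And>H. (H, G) \<in> forest_less \<Longrightarrow> forest_in D H \<Longrightarrow> \<exists>z. integral_dual D H z"
  shows "\<exists>x. integral_dual D G x"
proof -
  let ?P = "P @ [Node e []]"
  let ?y = "Bplus_mult e a b"
  define T where "T = {H. (?P, R) \<in> set (cuts H)} - {G}"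
  have cut: "(?P, R) \<in> set (cuts G)"
    using G(1) graft_in_cuts[OF \<open>R \<noteq> []\<close>] by simp
  with G(2) have "forest_in D ?P" "forest_in D R"
    by (simp_all add: forest_in_cuts)
  have weight_G: "weight G = weight ?P + weight R"
    using weight_cuts[OF cut] by simp
  have T_forests: "T \<subseteq> {H. forest_in D H \<and> weight H = weight G}"
    using \<open>forest_in D ?P\<close> \<open>forest_in D R\<close> weight_G
    by (auto simp: T_def forest_in_cuts dest: weight_cuts)
  then have "finite T"
    using finite_forests_weight[OF \<open>finite D\<close>] by (rule finite_subset)
  have "(H, G) \<in> forest_less" if "H \<in> T" for H
    using that forest_less_graft[of ?P R H] \<open>R \<noteq> []\<close> G(1) by (simp add: T_def)
  with T_forests smaller have "\<forall>H\<in>T. \<exists>z. integral_dual D H z"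
    by blast
  then obtain z where z: "\<And>H. H \<in> T \<Longrightarrow> integral_dual D H (z H)"
    by metis
  from \<open>forest_in D ?P\<close> have "e \<in> D"
    by simp
  note y = Bplus_mult_integral_duals[OF a b \<open>R \<noteq> []\<close> this]
  have "integral_dual D G (\<lambda>F. ?y F - (\<Sum>H\<in>T. form ?y H * z H F))"
  proof (rule integral_dual_correction)
    show "finite (supp ?y)" "?y F \<in> \<int>" for F
      by (fact y(1), fact y(3))
    show "forest_in D F \<and> weight F = weight G" if "F \<in> supp ?y" for F
      using y(2)[OF that] weight_G by simp
    show "finite T" "G \<notin> T"
      by (fact \<open>finite T\<close>, simp add: T_def)
    show "form ?y G = 1"
      using y(4) count_cuts_graft[OF \<open>R \<noteq> []\<close>] G(1) by simp
    show "H \<in> T" if "H \<noteq> G" "form ?y H \<noteq> 0" for H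
      using that y(4) by (auto simp: T_def count_list_0_iff)
    show "integral_dual D H (z H)" "weight H = weight G" if "H \<in> T" for H
      using z[OF that] T_forests that by auto
  qed
  then show ?thesis
    by blast
qed

lemma integral_dual_exists:
  assumes "finite D" "forest_in D G"
  shows "\<exists>x. integral_dual D G x"
  using assms(2)
proof (induction G rule: wf_induct[OF wf_forest_less])
  case (1 G)
  have smaller: "\<exists>z. integral_dual D H z" if "weight H < weight G" "forest_in D H" for H
    using "1.IH" that by (simp add: forest_less_if_weight_less)
  consider "G = []" | G' e where "G = G' @ [Node e []]"
    | P e R where "R \<noteq> []" "G = graft (P @ [Node e []]) R"
    using graft_decomposition[of G] by (metis append_butlast_last_id)
  then show ?case
  proof cases
    case 1
    then show ?thesis
      using integral_dual_Nil by blast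
  next
    case (2 G' e)
    note G = 2
    with "1.prems" have "forest_in D G'" "e \<in> D"
      by simp_all
    moreover have "weight G' < weight G"
      using G by simp
    ultimately obtain a where "integral_dual D G' a"
      using smaller by blast
    then have "integral_dual D (G' @ [Node e []]) (Bplus e a)"
      using \<open>e \<in> D\<close> by (rule integral_dual_Bplus)
    with G show ?thesis
      by blast
  next
    case (3 P e R)
    then have cut: "(P @ [Node e []], R) \<in> set (cuts G)"
      by (simp add: graft_in_cuts)
    with "1.prems" have "forest_in D P" "forest_in D R"
      by (simp_all add: forest_in_cuts)
    moreover have "weight P < weight G" "weight R < weight G"
      using weight_cuts[OF cut] \<open>R \<noteq> []\<close> by (simp_all flip: weight_eq_0_iff)
    ultimately obtain a b where a: "integral_dual D P a" and b: "integral_dual D R b"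
      using smaller by blast
    show ?thesis
    proof (rule integral_dual_graft[OF assms(1) 3 "1.prems" a b])
      show "\<exists>z. integral_dual D H z" if "(H, G) \<in> forest_less" "forest_in D H" for H
        using "1.IH" that by blast
    qed
  qed
qed

section \<open>Nondegeneracy and the dual basis\<close>

lemma sum_right_inverse_if_left_inverse:
  fixes p e :: "'a \<Rightarrow> 'a \<Rightarrow> 'f :: field"
  assumes "finite B"
    and left_inverse: "\<And>G H. G \<in> B \<Longrightarrow> H \<in> B \<Longrightarrow> (\<Sum>F\<in>B. e G F * p F H) = (if G = H then 1 else 0)"
    and "G \<in> B" "H \<in> B"
  shows "(\<Sum>F\<in>B. p G F * e F H) = (if G = H then 1 else 0)"
proof -
  obtain bs where bs: "set bs = B" "distinct bs"
    using finite_distinct_list[OF \<open>finite B\<close>] by blast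
  define m where "m = length bs"
  have sum_B: "(\<Sum>k\<in>{0..<m}. f (bs ! k)) = (\<Sum>F\<in>B. f F)" for f :: "'a \<Rightarrow> 'f"
    using sum.reindex_bij_betw[OF bij_betw_nth[OF bs(2) refl bs(1)[symmetric]], of f]
    by (simp add: m_def atLeast0LessThan)
  have nth_B: "bs ! i \<in> B" if "i < m" for i
    using bs(1) that by (auto simp: m_def)
  have nth_eq_iff: "bs ! i = bs ! j \<longleftrightarrow> i = j" if "i < m" "j < m" for i j
    using bs(2) that by (simp add: m_def nth_eq_iff_index_eq)
  define E where "E = mat m m (\<lambda>(i, j). e (bs ! i) (bs ! j))"
  define M where "M = mat m m (\<lambda>(i, j). p (bs ! i) (bs ! j))"
  have "E * M = 1\<^sub>m m"
  proof (rule eq_matI)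
    fix i j assume "i < dim_row (1\<^sub>m m :: 'f mat)" "j < dim_col (1\<^sub>m m :: 'f mat)"
    then have ij: "i < m" "j < m"
      by simp_all
    then have "(E * M) $$ (i, j) = (\<Sum>F\<in>B. e (bs ! i) F * p F (bs ! j))"
      using sum_B[of "\<lambda>F. e (bs ! i) F * p F (bs ! j)"] by (simp add: E_def M_def scalar_prod_def)
    with ij show "(E * M) $$ (i, j) = 1\<^sub>m m $$ (i, j)"
      using left_inverse[OF nth_B nth_B] nth_eq_iff by simp
  qed (simp_all add: E_def M_def)
  moreover have "E \<in> carrier_mat m m" "M \<in> carrier_mat m m"
    by (simp_all add: E_def M_def)
  ultimately have ME: "M * E = 1\<^sub>m m"
    using mat_mult_left_right_inverse by blast
  obtain i j where ij: "i < m" "bs ! i = G" "j < m" "bs ! j = H"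
    using \<open>G \<in> B\<close> \<open>H \<in> B\<close> bs(1) by (metis in_set_conv_nth m_def)
  then have "(\<Sum>F\<in>B. p G F * e F H) = (M * E) $$ (i, j)"
    using sum_B[of "\<lambda>F. p G F * e F H"] by (simp add: E_def M_def scalar_prod_def)
  with ij show ?thesis
    using ME nth_eq_iff by auto
qed

lemma left_kernel_trivial_if_left_invertible:
  fixes p e :: "'a \<Rightarrow> 'a \<Rightarrow> 'f :: field" and v :: "'a \<Rightarrow> 'f"
  assumes "finite B"
    and left_inverse: "\<And>G H. G \<in> B \<Longrightarrow> H \<in> B \<Longrightarrow> (\<Sum>F\<in>B. e G F * p F H) = (if G = H then 1 else 0)"
    and kernel: "\<And>H. H \<in> B \<Longrightarrow> (\<Sum>F\<in>B. v F * p F H) = 0"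
    and "F0 \<in> B"
  shows "v F0 = 0"
proof -
  have "v F0 = (\<Sum>F\<in>B. if F = F0 then v F else 0)"
    using assms(1,4) by (simp add: sum.delta)
  also have "\<dots> = (\<Sum>F\<in>B. v F * (\<Sum>H\<in>B. p F H * e H F0))"
    using sum_right_inverse_if_left_inverse[OF assms(1) left_inverse _ assms(4)]
    by (intro sum.cong refl) simp
  also have "\<dots> = (\<Sum>F\<in>B. \<Sum>H\<in>B. v F * p F H * e H F0)"
    by (simp add: sum_distrib_left mult.assoc)
  also have "\<dots> = (\<Sum>H\<in>B. (\<Sum>F\<in>B. v F * p F H) * e H F0)"
    by (subst sum.swap) (simp add: sum_distrib_right)
  also have "\<dots> = 0"
    using kernel by simp
  finally show ?thesis .
qed

lemma in_H_eq_0_if_form_eq_0: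
  fixes v :: "'d forest \<Rightarrow> rat"
  assumes "finite D" "in_H D v" "\<And>G. forest_in D G \<Longrightarrow> form v G = 0"
  shows "v F0 = 0"
proof (cases "F0 \<in> supp v")
  case True
  define B where "B = {F. forest_in D F \<and> weight F = weight F0}"
  have "\<forall>G\<in>B. \<exists>z. integral_dual D G z"
    using integral_dual_exists[OF assms(1)] by (simp add: B_def)
  then obtain z where z: "\<And>G. G \<in> B \<Longrightarrow> integral_dual D G (z G)"
    by metis
  show ?thesis
  proof (rule left_kernel_trivial_if_left_invertible[of B z pair v])
    show "finite B"
      unfolding B_def by (rule finite_forests_weight[OF assms(1)])
    show "(\<Sum>F\<in>B. z G F * pair F H) = (if G = H then 1 else 0)" if "G \<in> B" "H \<in> B" for G H
    proof -
      have "supp (z G) \<subseteq> B"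
        using z[OF that(1)] that(1) by (auto simp: integral_dual_def B_def)
      with \<open>finite B\<close> have "(\<Sum>F\<in>B. z G F * pair F H) = form (z G) H"
        by (simp add: form_conv_sum)
      with z[OF that(1)] show ?thesis
        by (auto simp: integral_dual_def)
    qed
    show "(\<Sum>F\<in>B. v F * pair F H) = 0" if "H \<in> B" for H
    proof -
      have "form v H = (\<Sum>F\<in>B. v F * pair F H)"
        using assms(2) that \<open>finite B\<close>
        by (intro form_conv_sum_weight) (auto simp: B_def in_H_iff_supp)
      with assms(3) that show ?thesis
        by (simp add: B_def)
    qed
    show "F0 \<in> B"
      using True assms(2) by (simp add: B_def in_H_iff_supp)
  qed
qed (simp add: supp_def)

lemma form_injective:
  fixes x y :: "'d forest \<Rightarrow> rat"
  assumes "finite D" "in_H D x" "in_H D y" "\<And>G. forest_in D G \<Longrightarrow> form x G = form y G"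
  shows "x = y"
proof
  fix F0
  from supp_diff_subset[of x y] assms(2,3) have "in_H D (\<lambda>F. x F - y F)"
    by (auto simp: in_H_iff_supp intro: finite_subset)
  moreover have "form (\<lambda>F. x F - y F) G = 0" if "forest_in D G" for G
    using assms(2-4) that by (simp add: form_diff in_H_iff_supp)
  ultimately have "x F0 - y F0 = 0"
    by (rule in_H_eq_0_if_form_eq_0[OF assms(1)])
  then show "x F0 = y F0"
    by simp
qed

lemma dual_basis_eq_integral_dual:
  assumes "finite D" "integral_dual D F x"
  shows "dual_basis D F = x"
  unfolding dual_basis_def
proof (rule the_equality)
  have "in_H D x"
    using assms(2) by (auto simp: integral_dual_def in_H_iff_supp)
  with assms(2) show "in_H D x \<and> (\<forall>G. forest_in D G \<longrightarrow> form x G = (if G = F then 1 else 0))"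
    by (simp add: integral_dual_def)
  show "y = x" if "in_H D y \<and> (\<forall>G. forest_in D G \<longrightarrow> form y G = (if G = F then 1 else 0))" for y
    using that \<open>in_H D x\<close> assms
    by (intro form_injective[OF assms(1)]) (auto simp: integral_dual_def)
qed

lemma integral_dual_dual_basis:
  "finite D \<Longrightarrow> forest_in D F \<Longrightarrow> integral_dual D F (dual_basis D F)"
  using integral_dual_exists dual_basis_eq_integral_dual by metis

lemma in_A_dual_basis: "finite D \<Longrightarrow> forest_in D F \<Longrightarrow> in_A D (dual_basis D F)"
  using integral_dual_dual_basis by (fastforce simp: in_A_def in_H_iff_supp integral_dual_def)

lemma form_dual_basis_lincomb:
  assumes "finite D" "finite S" "\<forall>F\<in>S. forest_in D F"
  shows "form (\<lambda>G. \<Sum>F\<in>S. c F * dual_basis D F G) H = (if H \<in> S then c H else 0)"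
proof -
  have db: "integral_dual D F (dual_basis D F)" if "F \<in> S" for F
    using assms that integral_dual_dual_basis by blast
  then have "form (\<lambda>G. \<Sum>F\<in>S. c F * dual_basis D F G) H = (\<Sum>F\<in>S. c F * form (dual_basis D F) H)"
    using assms(2) by (intro form_lincomb) (auto simp: integral_dual_def)
  also have "\<dots> = (\<Sum>F\<in>S. if H = F then c F else 0)"
    using db by (intro sum.cong refl) (simp add: integral_dual_def)
  finally show ?thesis
    using assms(2) by (simp add: sum.delta')
qed

lemma in_H_dual_basis_lincomb:
  assumes "finite D" "finite S" "\<forall>F\<in>S. forest_in D F"
  shows "in_H D (\<lambda>G. \<Sum>F\<in>S. c F * dual_basis D F G)"
  unfolding in_H_iff_supp
proof (intro conjI ballI)
  have db: "integral_dual D F (dual_basis D F)" if "F \<in> S" for F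
    using assms that integral_dual_dual_basis by blast
  note supp_sub = supp_lincomb_subset[where S = S and a = c and y = "dual_basis D"]
  show "finite (supp (\<lambda>G. \<Sum>F\<in>S. c F * dual_basis D F G))"
    using assms(2) db
    by (intro finite_subset[OF supp_sub] finite_UN_I) (simp_all add: integral_dual_def)
  fix G assume "G \<in> supp (\<lambda>G. \<Sum>F\<in>S. c F * dual_basis D F G)"
  with supp_sub obtain F where "F \<in> S" "G \<in> supp (dual_basis D F)"
    by blast
  with db[of F] show "forest_in D G"
    by (simp add: integral_dual_def)
qed

lemma finite_forests_weight_in:
  assumes "finite D" "finite N"
  shows "finite {F. forest_in D F \<and> weight F \<in> N}"
proof -
  have "{F. forest_in D F \<and> weight F \<in> N} = (\<Union>n\<in>N. {F. forest_in D F \<and> weight F = n})"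
    by auto
  with assms show ?thesis
    by (simp add: finite_forests_weight)
qed

lemma form_eq_0_if_weight_notin:
  assumes "finite (supp x)" "weight H \<notin> weight ` supp x"
  shows "form x H = 0"
proof -
  have "form x H = (\<Sum>F\<in>{}. x F * pair F H)"
    using assms by (intro form_conv_sum_weight) (auto simp: image_iff)
  then show ?thesis
    by simp
qed

lemma in_A_eq_sum_dual_basis:
  assumes "finite D" "in_A D x"
  shows "\<exists>S (c :: 'd forest \<Rightarrow> int). finite S \<and> (\<forall>F\<in>S. forest_in D F) \<and>
    (\<forall>G. x G = (\<Sum>F\<in>S. of_int (c F) * dual_basis D F G))"
proof -
  have x: "in_H D x" "\<And>F. x F \<in> \<int>"
    using assms(2) by (auto simp: in_A_def)
  define S where "S = {F. forest_in D F \<and> weight F \<in> weight ` supp x}"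
  have S: "finite S" "\<forall>F\<in>S. forest_in D F"
    using finite_forests_weight_in[OF assms(1)] x(1) by (simp_all add: S_def in_H_iff_supp)
  define c where "c F = \<lfloor>form x F\<rfloor>" for F
  have c: "of_int (c F) = form x F" for F
  proof -
    from x(2) have "form x F \<in> \<int>"
      by (rule form_in_Ints)
    then show ?thesis
      by (metis Ints_cases c_def floor_of_int)
  qed
  define y where "y = (\<lambda>G. \<Sum>F\<in>S. of_int (c F) * dual_basis D F G)"
  have "in_H D y"
    unfolding y_def by (rule in_H_dual_basis_lincomb[OF assms(1) S])
  moreover have "form x H = form y H" if "forest_in D H" for H
  proof -
    have "form y H = (if H \<in> S then form x H else 0)"
      using form_dual_basis_lincomb[OF assms(1) S, of "\<lambda>F. of_int (c F)" H] c by (simp add: y_def)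
    moreover have "form x H = 0" if "H \<notin> S"
      using that \<open>forest_in D H\<close> x(1)
      by (intro form_eq_0_if_weight_notin) (auto simp: S_def in_H_iff_supp)
    ultimately show ?thesis
      by auto
  qed
  ultimately have "x = y"
    using x(1) by (intro form_injective[OF assms(1)])
  show ?thesis
  proof (intro exI conjI)
    show "finite S" "\<forall>F\<in>S. forest_in D F"
      by (fact S(1), fact S(2))
    show "\<forall>G. x G = (\<Sum>F\<in>S. of_int (c F) * dual_basis D F G)"
      using \<open>x = y\<close> by (simp add: y_def)
  qed
qed

lemma dual_basis_linear_independent:
  assumes "finite D" "finite S" "\<forall>F\<in>S. forest_in D F"
    and "\<forall>G. (\<Sum>F\<in>S. of_int (c F) * dual_basis D F G) = 0" "F0 \<in> S"
  shows "c F0 = 0"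
proof -
  have "(\<lambda>G. \<Sum>F\<in>S. of_int (c F) * dual_basis D F G) = (\<lambda>_. 0)"
    using assms(4) by simp
  then have "form (\<lambda>_. 0) F0 = (if F0 \<in> S then of_int (c F0) else 0)"
    using form_dual_basis_lincomb[OF assms(1-3), of "\<lambda>F. of_int (c F)" F0] by simp
  with assms(5) show ?thesis
    by (simp add: form_def)
qed

theorem mainTheorem5:
  fixes D :: "'d set"
  assumes "finite D" and "D \<noteq> {}"
  shows "(\<forall>F. forest_in D F \<longrightarrow> in_A D (dual_basis D F))
    \<and> (\<forall>x. in_A D x \<longrightarrow>
         (\<exists>S (c :: 'd forest \<Rightarrow> int). finite S \<and> (\<forall>F\<in>S. forest_in D F) \<and>
            (\<forall>G. x G = (\<Sum>F\<in>S. of_int (c F) * dual_basis D F G))))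
    \<and> (\<forall>S (c :: 'd forest \<Rightarrow> int). finite S \<and> (\<forall>F\<in>S. forest_in D F) \<and>
          (\<forall>G. (\<Sum>F\<in>S. of_int (c F) * dual_basis D F G) = 0)
         \<longrightarrow> (\<forall>F\<in>S. c F = 0))"
proof (intro conjI allI impI)
  fix F assume "forest_in D F"
  with assms(1) show "in_A D (dual_basis D F)"
    by (rule in_A_dual_basis)
next
  fix x assume "in_A D x"
  with assms(1) show "\<exists>S (c :: 'd forest \<Rightarrow> int). finite S \<and> (\<forall>F\<in>S. forest_in D F) \<and>
      (\<forall>G. x G = (\<Sum>F\<in>S. of_int (c F) * dual_basis D F G))"
    by (rule in_A_eq_sum_dual_basis)
next
  fix S and c :: "'d forest \<Rightarrow> int"
  assume "finite S \<and> (\<forall>F\<in>S. forest_in D F) \<and> (\<forall>G. (\<Sum>F\<in>S. of_int (c F) * dual_basis D F G) = 0)"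
  with assms(1) show "\<forall>F\<in>S. c F = 0"
    using dual_basis_linear_independent by blast
qed

end
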